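(* Let $(M,d)$ be a pointed metric space and let $\mu\in ba(\widetilde M)$ be positive. The following are equivalent: (i) $\|\Phi^*\mu\|=\|\mu\|$. (ii) For every $\gamma\in(0,1)$ there exist $A\subseteq\widetilde M$ and $f\in B_{\mathrm{Lip}_0(M)}$ with $\mu(A)\ge\gamma\mu(\widetilde M)$ and $f(m_{x,y})\ge\gamma$ for all $(x,y)\in A$. (iii) For every $\gamma\in(0,1)$ there exists a $\gamma$-cyclically monotonic $A\subseteq\widetilde M$ with $\mu(A)\ge\gamma\mu(\widetilde M)$.
   Context: $(M,d)$ is a metric space with base point $0$; $\mathrm{Lip}_0(M)$ is the real Banach space of Lipschitz $f\colon M\to\mathbb R$ with $f(0)=0$, normed by the best Lipschitz constant, with closed unit ball $B_{\mathrm{Lip}_0(M)}$. $\widetilde M=\{(x,y)\in M\times M:x\ne y\}$ and $f(m_{x,y})=(f(x)-f(y))/d(x,y)$. $ba(\widetilde M)$ is the Banach space of bounded finitely additive signed measures on the power set of $\widetilde M$ with norm $|\mu|(\widetilde M)$. $\Phi\colon\mathrm{Lip}_0(M)\to\ell_\infty(\widetilde M)$, $\Phi f(x,y)=(f(x)-f(y))/d(x,y)$, and $(\Phi^*\mu)(f)=\int_{\widetilde M}\Phi f\,d\mu$. For $\gamma\in(0,1]$, $A\subseteq\widetilde M$ is $\gamma$-cyclically monotonic if for every finite sequence $(x_1,y_1),\dots,(x_n,y_n)\in A$, with $y_{n+1}=y_1$, $\sum_{i=1}^n\min\{d(x_i,y_{i+1})-\gamma d(x_i,y_i),\,d(y_i,y_{i+1})\}\ge0$.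 *)

theory Defs
  imports "HOL-Analysis.Analysis" "HOL-Library.Disjoint_Sets"
begin

definition Mtilde :: "'a set \<Rightarrow> ('a \<times> 'a) set" where
  "Mtilde M = {(x, y). x \<in> M \<and> y \<in> M \<and> x \<noteq> y}"

text \<open>Closed unit ball of Lip_0(M) for a metric d on M with base point z
  (only values on M matter).\<close>
definition lip0_ball :: "'a set \<Rightarrow> ('a \<Rightarrow> 'a \<Rightarrow> real) \<Rightarrow> 'a \<Rightarrow> ('a \<Rightarrow> real) set" where
  "lip0_ball M d z = {f. f z = 0 \<and> (\<forall>x\<in>M. \<forall>y\<in>M. \<bar>f x - f y\<bar> \<le> d x y)}"

definition Phi :: "('a \<Rightarrow> 'a \<Rightarrow> real) \<Rightarrow> ('a \<Rightarrow> real) \<Rightarrow> 'a \<times> 'a \<Rightarrow> real" where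
  "Phi d f = (\<lambda>(x, y). (f x - f y) / d x y)"

text \<open>Positive element of ba(T): a nonnegative finitely additive set function on
  the power set of T (positivity implies boundedness by mu T).\<close>
definition positive_ba :: "'b set \<Rightarrow> ('b set \<Rightarrow> real) \<Rightarrow> bool" where
  "positive_ba T \<mu> \<longleftrightarrow>
     (\<forall>A. A \<subseteq> T \<longrightarrow> 0 \<le> \<mu> A) \<and>
     (\<forall>A B. A \<subseteq> T \<longrightarrow> B \<subseteq> T \<longrightarrow> A \<inter> B = {} \<longrightarrow> \<mu> (A \<union> B) = \<mu> A + \<mu> B)"

text \<open>Integral of a bounded function g against a positive finitely additive
  measure on the power set of T (lower Darboux sums over finite partitions;
  for bounded g this coincides with the standard integral).\<close>
definition fa_integral :: "'b set \<Rightarrow> ('b set \<Rightarrow> real) \<Rightarrow> ('b \<Rightarrow> real) \<Rightarrow> real" where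
  "fa_integral T \<mu> g =
     Sup {(\<Sum>A\<in>P. Inf (g ` A) * \<mu> A) | P. finite P \<and> partition_on T P}"

definition Phi_star_norm :: "'a set \<Rightarrow> ('a \<Rightarrow> 'a \<Rightarrow> real) \<Rightarrow> 'a \<Rightarrow> (('a \<times> 'a) set \<Rightarrow> real) \<Rightarrow> real" where
  "Phi_star_norm M d z \<mu> =
     Sup {\<bar>fa_integral (Mtilde M) \<mu> (Phi d f)\<bar> | f. f \<in> lip0_ball M d z}"

definition cyc_mono :: "('a \<Rightarrow> 'a \<Rightarrow> real) \<Rightarrow> real \<Rightarrow> ('a \<times> 'a) set \<Rightarrow> bool" where
  "cyc_mono d \<gamma> A \<longleftrightarrow>
     (\<forall>(n::nat) (x::nat \<Rightarrow> 'a) (y::nat \<Rightarrow> 'a). n \<ge> 1 \<longrightarrow> (\<forall>i<n. (x i, y i) \<in> A) \<longrightarrow>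
        0 \<le> (\<Sum>i<n. min (d (x i) (y ((i + 1) mod n)) - \<gamma> * d (x i) (y i))
                        (d (y i) (y ((i + 1) mod n)))))"

end

theory Submission
  imports Defs
begin

(* (ii) says that Phi f is at least gamma on a set carrying almost all of mu.  Since the
   integrand Phi f takes values in [-1, 1], its integral is close to mu(Mtilde) exactly when
   such a large superlevel set exists (up to replacing f by -f); this gives (i) <-> (ii).
   For (ii) -> (iii), the differences f(y_i) - f(y_(i+1)) bound the summands of the
   cyclic monotonicity condition from above and telescope to 0 around every cycle.
   For (iii) -> (ii) we use Rockafellar's construction: the infimum of the costs of all
   chains from the base point to p that run through pairs of A is a 1-Lipschitz function g,
   finite by gamma-cyclic monotonicity, and f = -g satisfies f(x) - f(y) >= gamma d(x,y)
   for every pair (x,y) of A. *)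

lemma sum_mod_shift: "(\<Sum>i<n::nat. h ((i + 1) mod n)) = (\<Sum>i<n. h i :: 'b::comm_monoid_add)"
proof (cases n)
  case (Suc m)
  have "(\<Sum>i<Suc m. h ((i + 1) mod Suc m)) = (\<Sum>i<m. h (Suc i)) + h 0"
    by (simp add: sum.lessThan_Suc)
  also have "\<dots> = (\<Sum>i<Suc m. h i)"
    by (subst sum.lessThan_Suc_shift) (rule add.commute)
  finally show ?thesis using Suc by simp
qed simp

lemma Inf_le_Inf_plus:
  fixes c :: real
  assumes "S \<noteq> {}" and "bdd_below S'" and "\<And>s. s \<in> S \<Longrightarrow> \<exists>s'\<in>S'. s' \<le> s + c"
  shows "Inf S' \<le> Inf S + c"
proof -
  have "Inf S' - c \<le> Inf S"
  proof (rule cInf_greatest[OF assms(1)])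
    fix s assume "s \<in> S"
    then obtain s' where "s' \<in> S'" "s' \<le> s + c" using assms(3) by blast
    then show "Inf S' - c \<le> s" using cInf_lower[OF _ assms(2)] by fastforce
  qed
  then show ?thesis by simp
qed

lemma positive_ba_nonneg: "positive_ba T \<mu> \<Longrightarrow> A \<subseteq> T \<Longrightarrow> 0 \<le> \<mu> A"
  unfolding positive_ba_def by blast

lemma positive_ba_Un:
  "positive_ba T \<mu> \<Longrightarrow> A \<subseteq> T \<Longrightarrow> B \<subseteq> T \<Longrightarrow> A \<inter> B = {} \<Longrightarrow> \<mu> (A \<union> B) = \<mu> A + \<mu> B"
  unfolding positive_ba_def by blast

lemma positive_ba_empty: "positive_ba T \<mu> \<Longrightarrow> \<mu> {} = 0"
  using positive_ba_Un[of T \<mu> "{}" "{}"] by simp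

lemma positive_ba_Diff:
  assumes "positive_ba T \<mu>" and "A \<subseteq> T"
  shows "\<mu> (T - A) = \<mu> T - \<mu> A"
  using positive_ba_Un[OF assms(1,2), of "T - A"] assms(2) by (simp add: Un_absorb1)

lemma positive_ba_sum_Int:
  assumes \<mu>: "positive_ba T \<mu>" and "finite P" "disjoint P" "\<forall>B\<in>P. B \<subseteq> T" and C: "C \<subseteq> T"
  shows "(\<Sum>B\<in>P. \<mu> (B \<inter> C)) = \<mu> (\<Union>P \<inter> C)"
  using assms(2-4)
proof (induction P rule: finite_induct)
  case empty
  then show ?case using positive_ba_empty[OF \<mu>] by simp
next
  case (insert B P)
  have "disjoint P" using insert.prems(1) by (simp add: pairwise_insert)
  then have IH: "(\<Sum>B\<in>P. \<mu> (B \<inter> C)) = \<mu> (\<Union>P \<inter> C)"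
    using insert.IH insert.prems(2) by simp
  have "B \<inter> B' = {}" if "B' \<in> P" for B'
  proof -
    have "B' \<noteq> B" using insert.hyps(2) that by auto
    then show ?thesis using insert.prems(1) that unfolding disjoint_def by blast
  qed
  then have "\<mu> ((B \<inter> C) \<union> (\<Union>P \<inter> C)) = \<mu> (B \<inter> C) + \<mu> (\<Union>P \<inter> C)"
    using C by (intro positive_ba_Un[OF \<mu>]) auto
  moreover have "\<Union>(insert B P) \<inter> C = (B \<inter> C) \<union> (\<Union>P \<inter> C)" by blast
  ultimately show ?case using insert.hyps IH by simp
qed

lemma positive_ba_sum_partition:
  assumes "positive_ba T \<mu>" "finite P" "partition_on T P" "C \<subseteq> T"
  shows "(\<Sum>B\<in>P. \<mu> (B \<inter> C)) = \<mu> C"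
  using positive_ba_sum_Int[of T \<mu> P C] assms
  by (auto simp: partition_on_def Int_absorb1)

definition lower_sums :: "'b set \<Rightarrow> ('b set \<Rightarrow> real) \<Rightarrow> ('b \<Rightarrow> real) \<Rightarrow> real set" where
  "lower_sums T \<mu> g = {(\<Sum>A\<in>P. Inf (g ` A) * \<mu> A) | P. finite P \<and> partition_on T P}"

lemma fa_integral_eq_Sup_lower_sums: "fa_integral T \<mu> g = Sup (lower_sums T \<mu> g)"
  unfolding fa_integral_def lower_sums_def by (rule refl)

lemma lower_sums_nonempty: "lower_sums T \<mu> g \<noteq> {}"
proof -
  have "partition_on T ({T} - {{}})" by (rule partition_onI) (auto simp: disjnt_def)
  then have "(\<Sum>A\<in>{T} - {{}}. Inf (g ` A) * \<mu> A) \<in> lower_sums T \<mu> g"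
    unfolding lower_sums_def by blast
  then show ?thesis by blast
qed

lemma lower_sum_le_two_valued:
  assumes \<mu>: "positive_ba T \<mu>" and P: "finite P" "partition_on T P"
    and A: "A \<subseteq> T" and "a \<le> b" and bdd: "bdd_below (g ` T)"
    and le_b: "\<forall>q\<in>A. g q \<le> b" and le_a: "\<forall>q\<in>T - A. g q \<le> a"
  shows "(\<Sum>B\<in>P. Inf (g ` B) * \<mu> B) \<le> b * \<mu> A + a * \<mu> (T - A)"
proof -
  have block: "Inf (g ` B) * \<mu> B \<le> b * \<mu> (B \<inter> A) + a * \<mu> (B \<inter> (T - A))" if B: "B \<in> P" for B
  proof -
    have BT: "B \<subseteq> T" and "B \<noteq> {}" using P(2) B by (auto simp: partition_on_def)
    have Inf_le: "Inf (g ` B) \<le> g q" if "q \<in> B" for q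
      using bdd_below_mono[OF bdd image_mono[OF BT]] that by (simp add: cInf_lower)
    have split: "\<mu> B = \<mu> (B \<inter> A) + \<mu> (B \<inter> (T - A))"
    proof -
      have "B = (B \<inter> A) \<union> (B \<inter> (T - A))" using BT by blast
      then show ?thesis using positive_ba_Un[OF \<mu>, of "B \<inter> A" "B \<inter> (T - A)"] BT by auto
    qed
    have "Inf (g ` B) \<le> b"
    proof -
      obtain q where "q \<in> B" using \<open>B \<noteq> {}\<close> by blast
      then show ?thesis using Inf_le[of q] le_a le_b BT \<open>a \<le> b\<close> by (cases "q \<in> A") force+
    qed
    then have "Inf (g ` B) * \<mu> (B \<inter> A) \<le> b * \<mu> (B \<inter> A)"
      using positive_ba_nonneg[OF \<mu>, of "B \<inter> A"] A by (intro mult_right_mono) auto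
    moreover have "Inf (g ` B) * \<mu> (B \<inter> (T - A)) \<le> a * \<mu> (B \<inter> (T - A))"
    proof (cases "B \<inter> (T - A) = {}")
      case True
      then show ?thesis using positive_ba_empty[OF \<mu>] by simp
    next
      case False
      then obtain q where "q \<in> B \<inter> (T - A)" by blast
      then have "Inf (g ` B) \<le> a" using Inf_le[of q] le_a by force
      then show ?thesis using positive_ba_nonneg[OF \<mu>, of "B \<inter> (T - A)"] by (intro mult_right_mono) auto
    qed
    ultimately show ?thesis using split by (simp add: distrib_left)
  qed
  have "(\<Sum>B\<in>P. Inf (g ` B) * \<mu> B) \<le> (\<Sum>B\<in>P. b * \<mu> (B \<inter> A) + a * \<mu> (B \<inter> (T - A)))"
    using block by (rule sum_mono)
  also have "\<dots> = b * \<mu> A + a * \<mu> (T - A)"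
    using positive_ba_sum_partition[OF \<mu> P] A by (simp add: sum.distrib flip: sum_distrib_left)
  finally show ?thesis .
qed

lemma fa_integral_le_two_valued:
  assumes "positive_ba T \<mu>" and "A \<subseteq> T" and "a \<le> b" and "bdd_below (g ` T)"
    and "\<forall>q\<in>A. g q \<le> b" and "\<forall>q\<in>T - A. g q \<le> a"
  shows "fa_integral T \<mu> g \<le> b * \<mu> A + a * \<mu> (T - A)"
  unfolding fa_integral_eq_Sup_lower_sums
  using lower_sum_le_two_valued[OF assms(1) _ _ assms(2-)]
  by (intro cSup_least[OF lower_sums_nonempty]) (auto simp: lower_sums_def)

lemma bdd_above_lower_sums:
  assumes "positive_ba T \<mu>" and "bdd_below (g ` T)" and "bdd_above (g ` T)"
  shows "bdd_above (lower_sums T \<mu> g)"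
proof -
  obtain c where "\<forall>q\<in>T. g q \<le> c" using assms(3) by (auto simp: bdd_above_def)
  then have "s \<le> c * \<mu> T + c * \<mu> (T - T)" if "s \<in> lower_sums T \<mu> g" for s
    using that lower_sum_le_two_valued[OF assms(1) _ _ order.refl order.refl assms(2)]
    by (auto simp: lower_sums_def)
  then show ?thesis by (rule bdd_aboveI)
qed

lemma fa_integral_ge_two_valued:
  assumes \<mu>: "positive_ba T \<mu>" and A: "A \<subseteq> T" and bdd: "bdd_above (g ` T)"
    and ge_a: "\<forall>q\<in>A. a \<le> g q" and ge_b: "\<forall>q\<in>T - A. b \<le> g q"
  shows "a * \<mu> A + b * \<mu> (T - A) \<le> fa_integral T \<mu> g"
proof -
  define P where "P = {A, T - A} - {{}}"
  have P: "finite P" "partition_on T P"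
    unfolding P_def partition_on_def disjoint_def using A by auto
  have block: "a * \<mu> (B \<inter> A) + b * \<mu> (B \<inter> (T - A)) \<le> Inf (g ` B) * \<mu> B" if B: "B \<in> P" for B
  proof -
    have "B \<noteq> {}" "0 \<le> \<mu> B" using B A positive_ba_nonneg[OF \<mu>] by (auto simp: P_def)
    consider "B = A" | "B = T - A" "B \<noteq> A" using B by (auto simp: P_def)
    then show ?thesis
    proof cases
      case 1
      then have "a \<le> Inf (g ` B)" using ge_a \<open>B \<noteq> {}\<close> by (intro cInf_greatest) auto
      then show ?thesis using 1 \<open>0 \<le> \<mu> B\<close> positive_ba_empty[OF \<mu>]
        by (simp add: Int_absorb1 A mult_right_mono)
    next
      case 2
      then have "b \<le> Inf (g ` B)" using ge_b \<open>B \<noteq> {}\<close> by (intro cInf_greatest) auto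
      moreover have "B \<inter> A = {}" using 2 by blast
      ultimately show ?thesis using 2 \<open>0 \<le> \<mu> B\<close> positive_ba_empty[OF \<mu>]
        by (simp add: mult_right_mono)
    qed
  qed
  have "bdd_below (g ` T)"
    using ge_a ge_b by (intro bdd_belowI[of _ "min a b"]) force
  then have "bdd_above (lower_sums T \<mu> g)" by (rule bdd_above_lower_sums[OF \<mu> _ bdd])
  have "a * \<mu> A + b * \<mu> (T - A) = (\<Sum>B\<in>P. a * \<mu> (B \<inter> A) + b * \<mu> (B \<inter> (T - A)))"
    using positive_ba_sum_partition[OF \<mu> P] A by (simp add: sum.distrib flip: sum_distrib_left)
  also have "\<dots> \<le> (\<Sum>B\<in>P. Inf (g ` B) * \<mu> B)" using block by (rule sum_mono)
  also have "\<dots> \<le> fa_integral T \<mu> g"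
    unfolding fa_integral_eq_Sup_lower_sums using \<open>bdd_above (lower_sums T \<mu> g)\<close> P
    by (intro cSup_upper) (auto simp: lower_sums_def)
  finally show ?thesis .
qed

lemma abs_fa_integral_le:
  assumes \<mu>: "positive_ba T \<mu>" and g: "\<forall>q\<in>T. \<bar>g q\<bar> \<le> c"
  shows "\<bar>fa_integral T \<mu> g\<bar> \<le> c * \<mu> T"
proof -
  have le: "\<forall>q\<in>T. g q \<le> c" and ge: "\<forall>q\<in>T. -c \<le> g q" using g by auto
  have "bdd_below (g ` T)" using ge by (intro bdd_belowI[of _ "-c"]) auto
  then have "fa_integral T \<mu> g \<le> c * \<mu> T + c * \<mu> (T - T)"
    using le by (intro fa_integral_le_two_valued[OF \<mu>]) auto
  moreover have "bdd_above (g ` T)" using le by (intro bdd_aboveI[of _ c]) auto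
  then have "-c * \<mu> T + -c * \<mu> (T - T) \<le> fa_integral T \<mu> g"
    using ge by (intro fa_integral_ge_two_valued[OF \<mu>]) auto
  ultimately show ?thesis using positive_ba_empty[OF \<mu>] by simp
qed

lemma superlevel_set_large:
  assumes \<mu>: "positive_ba T \<mu>" and g: "\<forall>q\<in>T. \<bar>g q\<bar> \<le> 1" and "\<gamma> < 1"
    and gt: "\<gamma> * (2 - \<gamma>) * \<mu> T < fa_integral T \<mu> g"
  shows "\<gamma> * \<mu> T < \<mu> {q\<in>T. \<gamma> \<le> g q}"
proof -
  define A where "A = {q\<in>T. \<gamma> \<le> g q}"
  have A: "A \<subseteq> T" unfolding A_def by blast
  have "bdd_below (g ` T)" using g by (intro bdd_belowI[of _ "-1"]) force
  then have "fa_integral T \<mu> g \<le> 1 * \<mu> A + \<gamma> * \<mu> (T - A)"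
    using g \<open>\<gamma> < 1\<close> A by (intro fa_integral_le_two_valued[OF \<mu>]) (auto simp: A_def)
  then have "(1 - \<gamma>) * (\<gamma> * \<mu> T) < (1 - \<gamma>) * \<mu> A"
    using gt positive_ba_Diff[OF \<mu> A] by (simp add: algebra_simps)
  then show ?thesis using \<open>\<gamma> < 1\<close> unfolding A_def by simp
qed

lemma sublevel_set_large:
  assumes \<mu>: "positive_ba T \<mu>" and g: "\<forall>q\<in>T. \<bar>g q\<bar> \<le> 1" and "\<gamma> < 1"
    and lt: "fa_integral T \<mu> g < - (\<gamma> * (2 - \<gamma>) * \<mu> T)"
  shows "\<gamma> * \<mu> T < \<mu> {q\<in>T. g q \<le> - \<gamma>}"
proof -
  define A where "A = {q\<in>T. g q \<le> - \<gamma>}"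
  have A: "A \<subseteq> T" unfolding A_def by blast
  have "bdd_above (g ` T)" using g by (intro bdd_aboveI[of _ 1]) force
  then have "-1 * \<mu> A + - \<gamma> * \<mu> (T - A) \<le> fa_integral T \<mu> g"
    using g A by (intro fa_integral_ge_two_valued[OF \<mu>]) (auto simp: A_def abs_le_iff)
  then have "(1 - \<gamma>) * (\<gamma> * \<mu> T) < (1 - \<gamma>) * \<mu> A"
    using lt positive_ba_Diff[OF \<mu> A] by (simp add: algebra_simps)
  then show ?thesis using \<open>\<gamma> < 1\<close> unfolding A_def by simp
qed

lemma fa_integral_ge_if_superlevel_set_large:
  assumes \<mu>: "positive_ba T \<mu>" and g: "\<forall>q\<in>T. \<bar>g q\<bar> \<le> 1" and "0 \<le> \<gamma>"
    and A: "A \<subseteq> T" "\<forall>q\<in>A. \<gamma> \<le> g q" "\<gamma> * \<mu> T \<le> \<mu> A"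
  shows "(3 * \<gamma> - 2) * \<mu> T \<le> fa_integral T \<mu> g"
proof -
  have "bdd_above (g ` T)" using g by (intro bdd_aboveI[of _ 1]) force
  then have "\<gamma> * \<mu> A + -1 * \<mu> (T - A) \<le> fa_integral T \<mu> g"
    using g A by (intro fa_integral_ge_two_valued[OF \<mu>]) (auto simp: abs_le_iff)
  then have "(1 + \<gamma>) * \<mu> A - \<mu> T \<le> fa_integral T \<mu> g"
    using positive_ba_Diff[OF \<mu> A(1)] by (simp add: algebra_simps)
  moreover have "(1 + \<gamma>) * (\<gamma> * \<mu> T) \<le> (1 + \<gamma>) * \<mu> A"
    using A(3) \<open>0 \<le> \<gamma>\<close> by (intro mult_left_mono) auto
  moreover have "(3 * \<gamma> - 2) * \<mu> T + (1 - \<gamma>)\<^sup>2 * \<mu> T = (1 + \<gamma>) * (\<gamma> * \<mu> T) - \<mu> T"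
    by (simp add: algebra_simps power2_eq_square)
  moreover have "0 \<le> (1 - \<gamma>)\<^sup>2 * \<mu> T" using positive_ba_nonneg[OF \<mu>, of T] by simp
  ultimately show ?thesis by linarith
qed

(* The cost of the chain z, y_0, x_0, y_1, x_1, ..., x_(n-1), y_n: every step x_i -> y_(i+1)
   costs its length and every pair (x_i, y_i), traversed backwards, earns gamma d(x_i, y_i). *)
definition chain_cost ::
    "('a \<Rightarrow> 'a \<Rightarrow> real) \<Rightarrow> real \<Rightarrow> 'a \<Rightarrow> nat \<Rightarrow> (nat \<Rightarrow> 'a) \<Rightarrow> (nat \<Rightarrow> 'a) \<Rightarrow> real"
  where "chain_cost d \<gamma> z n x y = d z (y 0) + (\<Sum>i<n. d (x i) (y (Suc i)) - \<gamma> * d (x i) (y i))"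

definition chain_costs :: "('a \<Rightarrow> 'a \<Rightarrow> real) \<Rightarrow> real \<Rightarrow> 'a \<Rightarrow> ('a \<times> 'a) set \<Rightarrow> 'a \<Rightarrow> real set"
  where "chain_costs d \<gamma> z A p =
    {chain_cost d \<gamma> z n x y | n x y. y n = p \<and> (\<forall>i<n. (x i, y i) \<in> A)}"

definition chain_potential ::
    "('a \<Rightarrow> 'a \<Rightarrow> real) \<Rightarrow> real \<Rightarrow> 'a \<Rightarrow> ('a \<times> 'a) set \<Rightarrow> 'a \<Rightarrow> real"
  where "chain_potential d \<gamma> z A p = Inf (chain_costs d \<gamma> z A p)"

lemma chain_cost_0 [simp]: "chain_cost d \<gamma> z 0 x y = d z (y 0)"
  by (simp add: chain_cost_def)

lemma chain_cost_close:
  "chain_cost d \<gamma> z (Suc m) x (y(Suc m := y 0)) = d z (y 0)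
     + (\<Sum>i<Suc m. d (x i) (y ((i + 1) mod Suc m)) - \<gamma> * d (x i) (y i))"
  unfolding chain_cost_def by (auto intro!: sum.cong simp: mod_Suc)

lemma chain_cost_move_end:
  "chain_cost d \<gamma> z (Suc m) x (y(Suc m := q))
     = chain_cost d \<gamma> z (Suc m) x y - d (x m) (y (Suc m)) + d (x m) q"
proof -
  have "(\<Sum>i<m. d (x i) ((y(Suc m := q)) (Suc i)) - \<gamma> * d (x i) ((y(Suc m := q)) i))
      = (\<Sum>i<m. d (x i) (y (Suc i)) - \<gamma> * d (x i) (y i))"
    by (intro sum.cong) auto
  then show ?thesis unfolding chain_cost_def by simp
qed

lemma chain_cost_append:
  "chain_cost d \<gamma> z (Suc n) (x(n := a)) (y(Suc n := q))
     = chain_cost d \<gamma> z n x y + d a q - \<gamma> * d a (y n)"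
proof -
  have "(\<Sum>i<n. d ((x(n := a)) i) ((y(Suc n := q)) (Suc i)) - \<gamma> * d ((x(n := a)) i) ((y(Suc n := q)) i))
      = (\<Sum>i<n. d (x i) (y (Suc i)) - \<gamma> * d (x i) (y i))"
    by (intro sum.cong) auto
  then show ?thesis unfolding chain_cost_def by simp
qed

lemma cyc_mono_cycle_sum_nonneg:
  fixes n :: nat
  assumes "cyc_mono d \<gamma> A" and "1 \<le> n" and "\<forall>i<n. (x i, y i) \<in> A"
  shows "0 \<le> (\<Sum>i<n. d (x i) (y ((i + 1) mod n)) - \<gamma> * d (x i) (y i))"
proof -
  have "0 \<le> (\<Sum>i<n. min (d (x i) (y ((i + 1) mod n)) - \<gamma> * d (x i) (y i))
                        (d (y i) (y ((i + 1) mod n))))"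
    using assms unfolding cyc_mono_def by blast
  also have "\<dots> \<le> (\<Sum>i<n. d (x i) (y ((i + 1) mod n)) - \<gamma> * d (x i) (y i))"
    by (intro sum_mono) simp
  finally show ?thesis .
qed

lemma dist_in_chain_costs: "d z p \<in> chain_costs d \<gamma> z A p"
  unfolding chain_costs_def by (intro CollectI exI[of _ 0] exI[of _ "\<lambda>_. p"]) simp

lemma lip0_ball_uminus: "f \<in> lip0_ball M d z \<Longrightarrow> (\<lambda>x. - f x) \<in> lip0_ball M d z"
  unfolding lip0_ball_def by (auto simp: abs_minus_commute)

lemma Phi_uminus: "Phi d (\<lambda>x. - f x) q = - Phi d f q"
  by (cases q) (simp add: Phi_def minus_divide_left)

context Metric_space
begin

lemma zero_in_lip0_ball: "(\<lambda>_. 0) \<in> lip0_ball M d z"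
  unfolding lip0_ball_def by simp

lemma Phi_ge_iff:
  assumes "(x, y) \<in> Mtilde M"
  shows "\<gamma> \<le> Phi d f (x, y) \<longleftrightarrow> \<gamma> * d x y \<le> f x - f y"
proof -
  have "0 < d x y" using assms mdist_pos_less unfolding Mtilde_def by blast
  then show ?thesis unfolding Phi_def by (simp add: le_divide_eq)
qed

lemma abs_Phi_le_1:
  assumes f: "f \<in> lip0_ball M d z" and q: "q \<in> Mtilde M"
  shows "\<bar>Phi d f q\<bar> \<le> 1"
proof -
  obtain x y where xy: "q = (x, y)" "x \<in> M" "y \<in> M" "x \<noteq> y"
    using q unfolding Mtilde_def by blast
  then have "0 < d x y" using mdist_pos_less by blast
  moreover have "\<bar>f x - f y\<bar> \<le> d x y" using f xy unfolding lip0_ball_def by blast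
  ultimately show ?thesis unfolding xy(1) Phi_def by (simp add: abs_divide divide_le_eq_1)
qed

lemma abs_fa_integral_Phi_le:
  assumes "positive_ba (Mtilde M) \<mu>" and "f \<in> lip0_ball M d z"
  shows "\<bar>fa_integral (Mtilde M) \<mu> (Phi d f)\<bar> \<le> \<mu> (Mtilde M)"
  using abs_fa_integral_le[OF assms(1), of "Phi d f" 1] abs_Phi_le_1[OF assms(2)] by simp

lemma Phi_star_norm_le:
  assumes "positive_ba (Mtilde M) \<mu>"
  shows "Phi_star_norm M d z \<mu> \<le> \<mu> (Mtilde M)"
  unfolding Phi_star_norm_def using abs_fa_integral_Phi_le[OF assms] zero_in_lip0_ball
  by (intro cSup_least) auto

lemma abs_fa_integral_Phi_le_Phi_star_norm:
  assumes "positive_ba (Mtilde M) \<mu>" and "f \<in> lip0_ball M d z"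
  shows "\<bar>fa_integral (Mtilde M) \<mu> (Phi d f)\<bar> \<le> Phi_star_norm M d z \<mu>"
  unfolding Phi_star_norm_def using abs_fa_integral_Phi_le[OF assms(1)] assms(2)
  by (intro cSup_upper bdd_aboveI[of _ "\<mu> (Mtilde M)"]) auto

lemma less_Phi_star_norm_imp:
  assumes "c < Phi_star_norm M d z \<mu>"
  shows "\<exists>f\<in>lip0_ball M d z. c < \<bar>fa_integral (Mtilde M) \<mu> (Phi d f)\<bar>"
  using less_cSupD[OF _ assms[unfolded Phi_star_norm_def]] zero_in_lip0_ball by blast

lemma large_superlevel_set_if_Phi_star_norm_eq:
  assumes \<mu>: "positive_ba (Mtilde M) \<mu>" and N: "Phi_star_norm M d z \<mu> = \<mu> (Mtilde M)"
    and \<gamma>: "0 < \<gamma>" "\<gamma> < 1"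
  shows "\<exists>A f. A \<subseteq> Mtilde M \<and> f \<in> lip0_ball M d z \<and> \<gamma> * \<mu> (Mtilde M) \<le> \<mu> A
    \<and> (\<forall>(x, y)\<in>A. \<gamma> \<le> Phi d f (x, y))"
proof (cases "\<mu> (Mtilde M) = 0")
  case True
  then show ?thesis using zero_in_lip0_ball positive_ba_empty[OF \<mu>]
    by (intro exI[of _ "{}"] exI[of _ "\<lambda>_. 0"]) simp
next
  case False
  let ?T = "Mtilde M"
  have "0 < \<mu> ?T" using False positive_ba_nonneg[OF \<mu>, of ?T] by simp
  moreover have "\<gamma> * (2 - \<gamma>) < 1"
  proof -
    have "0 < (1 - \<gamma>)\<^sup>2" using \<gamma> by simp
    then show ?thesis by (simp add: power2_eq_square algebra_simps)
  qed
  ultimately have "\<gamma> * (2 - \<gamma>) * \<mu> ?T < Phi_star_norm M d z \<mu>"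
    using N by simp
  then obtain f where f: "f \<in> lip0_ball M d z"
    and gt: "\<gamma> * (2 - \<gamma>) * \<mu> ?T < \<bar>fa_integral ?T \<mu> (Phi d f)\<bar>"
    using less_Phi_star_norm_imp by blast
  have bounded: "\<forall>q\<in>?T. \<bar>Phi d f q\<bar> \<le> 1" using abs_Phi_le_1[OF f] by blast
  show ?thesis
  proof (cases "0 \<le> fa_integral ?T \<mu> (Phi d f)")
    case True
    then have "\<gamma> * \<mu> ?T < \<mu> {q\<in>?T. \<gamma> \<le> Phi d f q}"
      using gt by (intro superlevel_set_large[OF \<mu> bounded \<open>\<gamma> < 1\<close>]) simp
    then show ?thesis using f by (intro exI[of _ "{q\<in>?T. \<gamma> \<le> Phi d f q}"] exI[of _ f]) auto
  next
    case False
    then have "\<gamma> * \<mu> ?T < \<mu> {q\<in>?T. Phi d f q \<le> - \<gamma>}"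
      using gt by (intro sublevel_set_large[OF \<mu> bounded \<open>\<gamma> < 1\<close>]) simp
    then show ?thesis using lip0_ball_uminus[OF f]
      by (intro exI[of _ "{q\<in>?T. Phi d f q \<le> - \<gamma>}"] exI[of _ "\<lambda>x. - f x"]) (auto simp: Phi_uminus)
  qed
qed

lemma Phi_star_norm_eq_if_large_superlevel_sets:
  assumes \<mu>: "positive_ba (Mtilde M) \<mu>"
    and large: "\<And>\<gamma>. 0 < \<gamma> \<Longrightarrow> \<gamma> < 1 \<Longrightarrow> \<exists>A f. A \<subseteq> Mtilde M \<and> f \<in> lip0_ball M d z
      \<and> \<gamma> * \<mu> (Mtilde M) \<le> \<mu> A \<and> (\<forall>(x, y)\<in>A. \<gamma> \<le> Phi d f (x, y))"
  shows "Phi_star_norm M d z \<mu> = \<mu> (Mtilde M)"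
proof (rule antisym[OF Phi_star_norm_le[OF \<mu>] field_le_mult_one_interval])
  fix w :: real assume w: "0 < w" "w < 1"
  define \<gamma> where "\<gamma> = (w + 2) / 3"
  have "0 < \<gamma>" "\<gamma> < 1" using w by (auto simp: \<gamma>_def)
  then obtain A f where A: "A \<subseteq> Mtilde M" "\<gamma> * \<mu> (Mtilde M) \<le> \<mu> A"
    and f: "f \<in> lip0_ball M d z" and Phi_ge: "\<forall>(x, y)\<in>A. \<gamma> \<le> Phi d f (x, y)"
    using large by blast
  have "\<forall>q\<in>A. \<gamma> \<le> Phi d f q" using Phi_ge by fast
  then have "(3 * \<gamma> - 2) * \<mu> (Mtilde M) \<le> fa_integral (Mtilde M) \<mu> (Phi d f)"
    using abs_Phi_le_1[OF f] A \<open>0 < \<gamma>\<close>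
    by (intro fa_integral_ge_if_superlevel_set_large[OF \<mu>]) auto
  also have "\<dots> \<le> Phi_star_norm M d z \<mu>"
    using abs_fa_integral_Phi_le_Phi_star_norm[OF \<mu> f] by linarith
  finally have "(3 * \<gamma> - 2) * \<mu> (Mtilde M) \<le> Phi_star_norm M d z \<mu>" .
  moreover have "3 * \<gamma> - 2 = w" by (simp add: \<gamma>_def field_simps)
  ultimately show "w * \<mu> (Mtilde M) \<le> Phi_star_norm M d z \<mu>" by simp
qed

lemma cyc_mono_if_Phi_ge:
  assumes f: "f \<in> lip0_ball M d z" and A: "A \<subseteq> Mtilde M"
    and Phi_ge: "\<forall>(x, y)\<in>A. \<gamma> \<le> Phi d f (x, y)"
  shows "cyc_mono d \<gamma> A"
  unfolding cyc_mono_def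
proof (intro allI impI)
  fix n :: nat and x y :: "nat \<Rightarrow> 'a"
  assume "1 \<le> n" and xy: "\<forall>i<n. (x i, y i) \<in> A"
  let ?next = "\<lambda>i. (i + 1) mod n"
  have summand: "f (y i) - f (y (?next i))
      \<le> min (d (x i) (y (?next i)) - \<gamma> * d (x i) (y i)) (d (y i) (y (?next i)))"
    if "i < n" for i
  proof -
    have "?next i < n" using \<open>1 \<le> n\<close> by simp
    then have pairs: "(x i, y i) \<in> Mtilde M" "(x (?next i), y (?next i)) \<in> Mtilde M"
      using xy A \<open>i < n\<close> by auto
    then have "\<gamma> * d (x i) (y i) \<le> f (x i) - f (y i)"
      using Phi_ge xy \<open>i < n\<close> Phi_ge_iff by blast
    moreover have "f (x i) - f (y (?next i)) \<le> d (x i) (y (?next i))"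
      "f (y i) - f (y (?next i)) \<le> d (y i) (y (?next i))"
      using f pairs unfolding lip0_ball_def Mtilde_def by (auto simp: abs_le_iff)
    ultimately show ?thesis by simp
  qed
  have "(\<Sum>i<n. f (y (?next i))) = (\<Sum>i<n. f (y i))" by (rule sum_mod_shift)
  then have "0 = (\<Sum>i<n. f (y i) - f (y (?next i)))" by (simp only: sum_subtractf)
  also have "\<dots> \<le> (\<Sum>i<n. min (d (x i) (y (?next i)) - \<gamma> * d (x i) (y i)) (d (y i) (y (?next i))))"
    using summand by (intro sum_mono) auto
  finally show "0 \<le> (\<Sum>i<n. min (d (x i) (y (?next i)) - \<gamma> * d (x i) (y i)) (d (y i) (y (?next i))))" .
qed

context
  fixes z :: 'a and \<gamma> :: real and A :: "('a \<times> 'a) set"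
  assumes z: "z \<in> M" and A: "A \<subseteq> Mtilde M" and cyc: "cyc_mono d \<gamma> A"
begin

lemma chain_cost_ge_neg_dist:
  assumes p: "p \<in> M" and y: "y n = p" and xy: "\<forall>i<n. (x i, y i) \<in> A"
  shows "- d p z \<le> chain_cost d \<gamma> z n x y"
proof (cases n)
  case 0
  then have "chain_cost d \<gamma> z n x y = d z p" using y by simp
  then show ?thesis using nonneg[of z p] nonneg[of p z] by linarith
next
  case (Suc m)
  have pts: "x m \<in> M" "y 0 \<in> M" using xy A Suc unfolding Mtilde_def by auto
  have "0 \<le> chain_cost d \<gamma> z (Suc m) x (y(Suc m := y 0)) - d z (y 0)"
    using cyc_mono_cycle_sum_nonneg[OF cyc _ xy] Suc by (simp add: chain_cost_close)
  moreover have "d (x m) (y 0) \<le> d (x m) p + d p z + d z (y 0)"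
    using triangle[OF pts(1) p pts(2)] triangle[OF p z pts(2)] by linarith
  ultimately show ?thesis using Suc y by (simp add: chain_cost_move_end)
qed

lemma bdd_below_chain_costs: "p \<in> M \<Longrightarrow> bdd_below (chain_costs d \<gamma> z A p)"
  unfolding chain_costs_def using chain_cost_ge_neg_dist by (intro bdd_belowI[of _ "- d p z"]) blast

lemma chain_potential_le_plus_dist:
  assumes p: "p \<in> M" and q: "q \<in> M"
  shows "chain_potential d \<gamma> z A q \<le> chain_potential d \<gamma> z A p + d p q"
  unfolding chain_potential_def
proof (rule Inf_le_Inf_plus[OF _ bdd_below_chain_costs[OF q]])
  show "chain_costs d \<gamma> z A p \<noteq> {}" using dist_in_chain_costs[of d z p] by blast
next
  fix s assume "s \<in> chain_costs d \<gamma> z A p"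
  then obtain n x y where s: "s = chain_cost d \<gamma> z n x y"
    and y: "y n = p" and xy: "\<forall>i<n. (x i, y i) \<in> A"
    unfolding chain_costs_def by blast
  have "chain_cost d \<gamma> z n x (y(n := q)) \<in> chain_costs d \<gamma> z A q"
    unfolding chain_costs_def using xy by (intro CollectI exI conjI[OF refl]) auto
  moreover have "chain_cost d \<gamma> z n x (y(n := q)) \<le> s + d p q"
  proof (cases n)
    case 0
    then show ?thesis using s y triangle[OF z p q] by simp
  next
    case (Suc m)
    have "x m \<in> M" using xy A Suc unfolding Mtilde_def by auto
    then have "d (x m) q \<le> d (x m) p + d p q" using triangle[OF _ p q] by blast
    then show ?thesis using s y Suc by (simp add: chain_cost_move_end)
  qed
  ultimately show "\<exists>s'\<in>chain_costs d \<gamma> z A q. s' \<le> s + d p q" by blast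
qed

lemma chain_potential_descent:
  assumes ab: "(a, b) \<in> A"
  shows "chain_potential d \<gamma> z A a \<le> chain_potential d \<gamma> z A b - \<gamma> * d a b"
proof -
  have a: "a \<in> M" using ab A unfolding Mtilde_def by auto
  have "\<exists>s'\<in>chain_costs d \<gamma> z A a. s' \<le> s + - (\<gamma> * d a b)"
    if "s \<in> chain_costs d \<gamma> z A b" for s
  proof -
    from that obtain n x y where s: "s = chain_cost d \<gamma> z n x y"
      and y: "y n = b" and xy: "\<forall>i<n. (x i, y i) \<in> A"
      unfolding chain_costs_def by blast
    have "chain_cost d \<gamma> z (Suc n) (x(n := a)) (y(Suc n := a)) \<in> chain_costs d \<gamma> z A a"
      unfolding chain_costs_def using xy ab y
      by (intro CollectI exI conjI[OF refl]) (auto simp: less_Suc_eq)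
    moreover have "chain_cost d \<gamma> z (Suc n) (x(n := a)) (y(Suc n := a)) = s - \<gamma> * d a b"
      using s y a by (simp add: chain_cost_append)
    ultimately show ?thesis by force
  qed
  then have "Inf (chain_costs d \<gamma> z A a) \<le> Inf (chain_costs d \<gamma> z A b) + - (\<gamma> * d a b)"
    using dist_in_chain_costs[of d z b] by (intro Inf_le_Inf_plus bdd_below_chain_costs[OF a]) auto
  then show ?thesis unfolding chain_potential_def by simp
qed

lemma chain_potential_base_point: "chain_potential d \<gamma> z A z = 0"
proof (rule antisym)
  show "chain_potential d \<gamma> z A z \<le> 0"
    unfolding chain_potential_def
    using cInf_lower[OF dist_in_chain_costs bdd_below_chain_costs[OF z]] z by simp
  show "0 \<le> chain_potential d \<gamma> z A z"
    unfolding chain_potential_def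
  proof (rule cInf_greatest)
    show "chain_costs d \<gamma> z A z \<noteq> {}" using dist_in_chain_costs[of d z z] by blast
    fix s assume "s \<in> chain_costs d \<gamma> z A z"
    then show "0 \<le> s" unfolding chain_costs_def using chain_cost_ge_neg_dist[OF z] z by auto
  qed
qed

lemma Phi_ge_if_cyc_mono: "\<exists>f\<in>lip0_ball M d z. \<forall>(x, y)\<in>A. \<gamma> \<le> Phi d f (x, y)"
proof
  let ?f = "\<lambda>p. - chain_potential d \<gamma> z A p"
  have "\<bar>?f x - ?f y\<bar> \<le> d x y" if "x \<in> M" "y \<in> M" for x y
    using chain_potential_le_plus_dist[OF that] chain_potential_le_plus_dist[OF that(2,1)]
      commute[of x y] by (auto simp: abs_le_iff)
  then show "?f \<in> lip0_ball M d z"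
    unfolding lip0_ball_def using chain_potential_base_point by simp
  show "\<forall>(x, y)\<in>A. \<gamma> \<le> Phi d ?f (x, y)"
    using chain_potential_descent A Phi_ge_iff by fastforce
qed

end

end

theorem corollary2p6:
  fixes M :: "'a set" and d :: "'a \<Rightarrow> 'a \<Rightarrow> real" and z :: 'a
    and \<mu> :: "('a \<times> 'a) set \<Rightarrow> real"
  assumes "Metric_space M d" and "z \<in> M"
    and "positive_ba (Mtilde M) \<mu>"
  shows "(Phi_star_norm M d z \<mu> = \<mu> (Mtilde M)
           \<longleftrightarrow> (\<forall>\<gamma>. 0 < \<gamma> \<and> \<gamma> < 1 \<longrightarrow>
                 (\<exists>A f. A \<subseteq> Mtilde M \<and> f \<in> lip0_ball M d z \<and>
                        \<mu> A \<ge> \<gamma> * \<mu> (Mtilde M) \<and> (\<forall>(x, y)\<in>A. Phi d f (x, y) \<ge> \<gamma>))))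
       \<and> (Phi_star_norm M d z \<mu> = \<mu> (Mtilde M)
           \<longleftrightarrow> (\<forall>\<gamma>. 0 < \<gamma> \<and> \<gamma> < 1 \<longrightarrow>
                 (\<exists>A. A \<subseteq> Mtilde M \<and> cyc_mono d \<gamma> A \<and> \<mu> A \<ge> \<gamma> * \<mu> (Mtilde M))))"
proof -
  interpret Metric_space M d by fact
  note \<mu> = assms(3)
  have ii_iff_iii: "(\<exists>A f. A \<subseteq> Mtilde M \<and> f \<in> lip0_ball M d z \<and> \<gamma> * \<mu> (Mtilde M) \<le> \<mu> A
        \<and> (\<forall>(x, y)\<in>A. \<gamma> \<le> Phi d f (x, y)))
      \<longleftrightarrow> (\<exists>A. A \<subseteq> Mtilde M \<and> cyc_mono d \<gamma> A \<and> \<gamma> * \<mu> (Mtilde M) \<le> \<mu> A)" for \<gamma>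
    using cyc_mono_if_Phi_ge Phi_ge_if_cyc_mono[OF assms(2)] by meson
  show ?thesis
    unfolding ii_iff_iii[symmetric]
    using large_superlevel_set_if_Phi_star_norm_eq[OF \<mu>]
      Phi_star_norm_eq_if_large_superlevel_sets[OF \<mu>] by blast
qed

end
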